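(* Let $n\ge 4$ be an integer, let $B_n$ be the boundary simplicial complex of the bipyramid over an $n$-gon (defined in the context), and let $I_{B_n}\subset k[x_0,\dots,x_{n+1}]$ be its Stanley-Reisner ideal. Then the Waldschmidt constant of $I_{B_n}$ is $$\gamma(I_{B_n})=\frac{n}{n-2}.$$
   Context: Let $k$ be a field and $n\ge 3$. The base $n$-gon $Q_n$ has vertices $1,\dots,n$ in cyclic order, so its edges are $\{i,i+1\}$ for $1\le i\le n-1$ and $\{n,1\}$. The bipyramid $B_n$ over $Q_n$ has two extra vertices $0$ (upper) and $n+1$ (lower); as a simplicial complex on $\{0,1,\dots,n+1\}$, $B_n$ is the boundary complex of the bipyramid, i.e. the complex whose facets are the triangles $\{0,i,j\}$ and $\{n+1,i,j\}$ for every edge $\{i,j\}$ of $Q_n$. The Stanley-Reisner ideal $I_{\Delta}$ of a simplicial complex $\Delta$ on $\{0,\dots,n+1\}$ is the ideal of $R=k[x_0,\dots,x_{n+1}]$ generated by the monomials $\prod_{i\in\tau}x_i$ with $\tau\notin\Delta$. For a homogeneous ideal $0\ne I\subseteq R$, the $m$-th symbolic power is $I^{(m)}=R\cap\bigcap_{P\in \mathrm{Ass}(I)} I^mR_P$, $\alpha(I)=\min\{t: I_t\neq 0\}$, and the Waldschmidt constant is $\gamma(I)=\lim_{m\to\infty}\alpha(I^{(m)})/m$. *)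

theory Defs
  imports "HOL-Analysis.Analysis" "HOL-Library.Poly_Mapping"
begin

text \<open>Multivariate polynomials over a field 'k in variables x_i (i :: nat):
  maps from monomials (finitely supported exponent vectors) to coefficients, with the
  convolution product of Poly_Mapping.\<close>

type_synonym 'k mpol = "(nat \<Rightarrow>\<^sub>0 nat) \<Rightarrow>\<^sub>0 'k"

definition polys :: "nat set \<Rightarrow> 'k::zero mpol set" where
  "polys V = {p. \<forall>m\<in>Poly_Mapping.keys p. Poly_Mapping.keys m \<subseteq> V}"

definition Var :: "nat \<Rightarrow> 'k::{zero,one} mpol" where
  "Var i = Poly_Mapping.single (Poly_Mapping.single i 1) 1"

definition sqfree_monomial :: "nat set \<Rightarrow> 'k::comm_semiring_1 mpol" where
  "sqfree_monomial \<tau> = (\<Prod>i\<in>\<tau>. Var i)"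

definition is_ideal :: "'a::comm_ring_1 set \<Rightarrow> 'a set \<Rightarrow> bool" where
  "is_ideal R I \<longleftrightarrow> I \<subseteq> R \<and> 0 \<in> I \<and> (\<forall>a\<in>I. \<forall>b\<in>I. a + b \<in> I)
      \<and> (\<forall>r\<in>R. \<forall>a\<in>I. r * a \<in> I)"

definition ideal_gen :: "'a::comm_ring_1 set \<Rightarrow> 'a set \<Rightarrow> 'a set" where
  "ideal_gen R G = {p. \<exists>A r. finite A \<and> A \<subseteq> G \<and> (\<forall>g\<in>A. r g \<in> R) \<and> p = (\<Sum>g\<in>A. r g * g)}"

definition ideal_pow :: "'a::comm_ring_1 set \<Rightarrow> 'a set \<Rightarrow> nat \<Rightarrow> 'a set" where
  "ideal_pow R I m = ideal_gen R {prod_list xs | xs. length xs = m \<and> set xs \<subseteq> I}"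

definition prime_ideal :: "'a::comm_ring_1 set \<Rightarrow> 'a set \<Rightarrow> bool" where
  "prime_ideal R P \<longleftrightarrow> is_ideal R P \<and> P \<noteq> R \<and>
      (\<forall>a\<in>R. \<forall>b\<in>R. a * b \<in> P \<longrightarrow> a \<in> P \<or> b \<in> P)"

definition Ass :: "'a::comm_ring_1 set \<Rightarrow> 'a set \<Rightarrow> 'a set set" where
  "Ass R I = {P. prime_ideal R P \<and> (\<exists>f\<in>R. P = {r\<in>R. r * f \<in> I})}"

text \<open>Symbolic power I^(m) = R \<inter> \<Inter>_{P \<in> Ass I} I^m R_P. For a domain R,
  f \<in> R lies in I^m R_P iff s f \<in> I^m for some s \<in> R - P.\<close>
definition symbolic_power :: "'a::comm_ring_1 set \<Rightarrow> 'a set \<Rightarrow> nat \<Rightarrow> 'a set" where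
  "symbolic_power R I m =
     {f\<in>R. \<forall>P\<in>Ass R I. \<exists>s\<in>R - P. s * f \<in> ideal_pow R I m}"

definition mon_deg :: "(nat \<Rightarrow>\<^sub>0 nat) \<Rightarrow> nat" where
  "mon_deg m = (\<Sum>i\<in>Poly_Mapping.keys m. Poly_Mapping.lookup m i)"

definition homogeneous_of :: "nat \<Rightarrow> 'k::zero mpol \<Rightarrow> bool" where
  "homogeneous_of t p \<longleftrightarrow> (\<forall>m\<in>Poly_Mapping.keys p. mon_deg m = t)"

definition alpha :: "'k::zero mpol set \<Rightarrow> nat" where
  "alpha J = (LEAST t. \<exists>p\<in>J. p \<noteq> 0 \<and> homogeneous_of t p)"

definition stanley_reisner :: "nat set \<Rightarrow> nat set set \<Rightarrow> 'k::comm_ring_1 mpol set" where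
  "stanley_reisner V \<Delta> = ideal_gen (polys V) {sqfree_monomial \<tau> | \<tau>. \<tau> \<subseteq> V \<and> \<tau> \<notin> \<Delta>}"

definition ngon_edges :: "nat \<Rightarrow> nat set set" where
  "ngon_edges n = {{i, i + 1} | i. 1 \<le> i \<and> i \<le> n - 1} \<union> {{n, 1}}"

definition bipyramid_facets :: "nat \<Rightarrow> nat set set" where
  "bipyramid_facets n = {insert 0 e | e. e \<in> ngon_edges n} \<union> {insert (n + 1) e | e. e \<in> ngon_edges n}"

definition bipyramid :: "nat \<Rightarrow> nat set set" where
  "bipyramid n = {\<sigma>. \<exists>F\<in>bipyramid_facets n. \<sigma> \<subseteq> F}"

end

theory Submission
  imports Defs
begin

text \<open>
  The Stanley-Reisner ideal \<open>I\<close> is monomial and its associated primes are the primes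
  \<open>P_F = (x_j : j \<notin> F)\<close> of the facets \<open>F\<close>. The \<open>P_F\<close>-adic filtration is the grading by
  the degree outside \<open>F\<close>, so every monomial of an element of \<open>I^(m)\<close> has degree at least \<open>m\<close>
  outside every facet. For the bipyramid, adding these inequalities over the \<open>2n\<close> facets
  \<open>{a, i, i + 1}\<close> (\<open>a\<close> an apex) shows \<open>n m \<le> (n - 2) t\<close> for a monomial of degree \<open>t\<close> in
  \<open>I^(m)\<close>. Conversely \<open>(x_1 \<cdots> x_n)^c \<in> I^(m)\<close> as soon as \<open>m \<le> (n - 2) c\<close>: multiplied by
  \<open>(x_i x_i')^((n - 2) c) \<notin> P_F\<close>, \<open>F = {a, i, i'}\<close>, it becomes a multiple of a product of
  \<open>(n - 2) c\<close> non-faces \<open>{i, i', j}\<close>. Hence \<open>\<alpha>(I^(m)) = n m / (n - 2) + O(1)\<close>.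
\<close>

section \<open>Generated ideals and polynomial subrings\<close>

lemma ideal_gen_subset:
  assumes "0 \<in> S" "\<And>a b. a \<in> S \<Longrightarrow> b \<in> S \<Longrightarrow> a + b \<in> S"
    "\<And>r g. r \<in> R \<Longrightarrow> g \<in> G \<Longrightarrow> r * g \<in> S"
  shows "ideal_gen R G \<subseteq> S"
proof
  fix p assume "p \<in> ideal_gen R G"
  then obtain A r where A: "finite A" "A \<subseteq> G" "\<forall>g\<in>A. r g \<in> R" and p: "p = (\<Sum>g\<in>A. r g * g)"
    unfolding ideal_gen_def by blast
  from A have "(\<Sum>g\<in>A. r g * g) \<in> S"
    by (induction A rule: finite_induct) (use assms in simp_all)
  then show "p \<in> S" using p by simp
qed

lemma ideal_gen_mult_mem:
  assumes "r \<in> R" "g \<in> G"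
  shows "r * g \<in> ideal_gen R G"
  unfolding ideal_gen_def using assms
  by (intro CollectI exI[of _ "{g}"] exI[of _ "\<lambda>_. r"]) auto

lemma ideal_gen_add:
  assumes R: "0 \<in> R" "\<And>a b. a \<in> R \<Longrightarrow> b \<in> R \<Longrightarrow> a + b \<in> R"
    and p: "p \<in> ideal_gen R G" and q: "q \<in> ideal_gen R G"
  shows "p + q \<in> ideal_gen R G"
proof -
  obtain A r where A: "finite A" "A \<subseteq> G" "\<forall>g\<in>A. r g \<in> R" and p_eq: "p = (\<Sum>g\<in>A. r g * g)"
    using p unfolding ideal_gen_def by blast
  obtain B s where B: "finite B" "B \<subseteq> G" "\<forall>g\<in>B. s g \<in> R" and q_eq: "q = (\<Sum>g\<in>B. s g * g)"
    using q unfolding ideal_gen_def by blast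
  define t where "t g = (if g \<in> A then r g else 0) + (if g \<in> B then s g else 0)" for g
  have "(\<Sum>g\<in>A \<union> B. t g * g)
      = (\<Sum>g\<in>A \<union> B. if g \<in> A then r g * g else 0) + (\<Sum>g\<in>A \<union> B. if g \<in> B then s g * g else 0)"
    unfolding sum.distrib[symmetric] t_def by (intro sum.cong refl) (simp add: distrib_right)
  also have "\<dots> = p + q"
    using A(1) B(1) unfolding p_eq q_eq by (simp add: sum.If_cases Int_absorb1 Int_absorb2)
  finally have "p + q = (\<Sum>g\<in>A \<union> B. t g * g)" by simp
  moreover have "\<forall>g\<in>A \<union> B. t g \<in> R" using A B R unfolding t_def by auto
  ultimately show ?thesis unfolding ideal_gen_def using A B
    by (intro CollectI exI[of _ "A \<union> B"] exI[of _ t]) auto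
qed

lemma ideal_gen_sum:
  assumes "0 \<in> R" "\<And>a b. a \<in> R \<Longrightarrow> b \<in> R \<Longrightarrow> a + b \<in> R"
    and "finite X" "\<And>x. x \<in> X \<Longrightarrow> f x \<in> ideal_gen R G"
  shows "sum f X \<in> ideal_gen R G"
  using assms(3,4)
proof (induction X rule: finite_induct)
  case empty
  show ?case unfolding ideal_gen_def by (intro CollectI exI[of _ "{}"]) auto
next
  case (insert x X)
  then show ?case by (simp add: ideal_gen_add[OF assms(1,2)])
qed

lemma polys_zero: "0 \<in> polys V"
  unfolding polys_def by simp

lemma polys_one: "1 \<in> polys V"
  unfolding polys_def by simp

lemma polys_add: "p \<in> polys V \<Longrightarrow> q \<in> polys V \<Longrightarrow> p + q \<in> polys V"
  using keys_add[of p q] unfolding polys_def by blast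

lemma keys_add_nat:
  "Poly_Mapping.keys ((a::nat \<Rightarrow>\<^sub>0 nat) + b) = Poly_Mapping.keys a \<union> Poly_Mapping.keys b"
  by (auto simp: in_keys_iff lookup_add)

lemma polys_mult:
  assumes "p \<in> polys V" "(q::'k::comm_semiring_1 mpol) \<in> polys V"
  shows "p * q \<in> polys V"
  unfolding polys_def
proof (intro CollectI ballI)
  fix u assume "u \<in> Poly_Mapping.keys (p * q)"
  then obtain a b where "u = a + b" "a \<in> Poly_Mapping.keys p" "b \<in> Poly_Mapping.keys q"
    using keys_mult[of p q] by blast
  then show "Poly_Mapping.keys u \<subseteq> V" using assms unfolding polys_def by (auto simp: keys_add_nat)
qed

lemma single_eq_zero_iff [simp]: "Poly_Mapping.single k v = 0 \<longleftrightarrow> v = 0"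
  by (metis lookup_single_eq lookup_zero single_zero)

lemma polys_single: "Poly_Mapping.keys u \<subseteq> V \<Longrightarrow> Poly_Mapping.single u c \<in> polys V"
  unfolding polys_def by simp

lemma polys_Var: "i \<in> V \<Longrightarrow> (Var i :: 'k::comm_semiring_1 mpol) \<in> polys V"
  unfolding Var_def by (rule polys_single) simp

lemma polys_power: "(p :: 'k::comm_semiring_1 mpol) \<in> polys V \<Longrightarrow> p ^ k \<in> polys V"
  by (induction k) (auto intro: polys_one polys_mult)

lemma polys_prod:
  "(\<And>a. a \<in> A \<Longrightarrow> f a \<in> polys V) \<Longrightarrow> (\<Prod>a\<in>A. f a :: 'k::comm_semiring_1 mpol) \<in> polys V"
  by (induction A rule: infinite_finite_induct) (auto intro: polys_one polys_mult)

lemma polys_prod_list: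
  "set xs \<subseteq> polys V \<Longrightarrow> prod_list (xs :: 'k::comm_semiring_1 mpol list) \<in> polys V"
  by (induction xs) (auto intro: polys_one polys_mult)

lemma poly_mapping_sum_single:
  "p = (\<Sum>u\<in>Poly_Mapping.keys p. Poly_Mapping.single u (Poly_Mapping.lookup p u))"
proof (rule poly_mapping_eqI)
  fix x
  have "(\<Sum>u\<in>Poly_Mapping.keys p. Poly_Mapping.lookup (Poly_Mapping.single u (Poly_Mapping.lookup p u)) x)
     = (\<Sum>u\<in>Poly_Mapping.keys p. if u = x then Poly_Mapping.lookup p u else 0)"
    by (intro sum.cong refl) (simp add: lookup_single when_def)
  then show "Poly_Mapping.lookup p x
      = Poly_Mapping.lookup (\<Sum>u\<in>Poly_Mapping.keys p. Poly_Mapping.single u (Poly_Mapping.lookup p u)) x"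
    by (simp add: lookup_sum sum.delta in_keys_iff)
qed

definition sqfree_exp :: "nat set \<Rightarrow> nat \<Rightarrow>\<^sub>0 nat" where
  "sqfree_exp A = (\<Sum>i\<in>A. Poly_Mapping.single i 1)"

lemma lookup_sqfree_exp:
  "finite A \<Longrightarrow> Poly_Mapping.lookup (sqfree_exp A) x = (if x \<in> A then 1 else 0)"
  unfolding sqfree_exp_def by (simp add: lookup_sum lookup_single when_def)

lemma keys_sqfree_exp: "finite A \<Longrightarrow> Poly_Mapping.keys (sqfree_exp A) = A"
  by (auto simp: in_keys_iff lookup_sqfree_exp split: if_splits)

lemma sqfree_monomial_eq_single:
  assumes "finite A"
  shows "(sqfree_monomial A :: 'k::comm_semiring_1 mpol) = Poly_Mapping.single (sqfree_exp A) 1"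
  using assms unfolding sqfree_monomial_def Var_def sqfree_exp_def
  by (induction A rule: finite_induct) (auto simp: mult_single add.commute)

section \<open>Weight filtrations\<close>

definition additive_weight :: "((nat \<Rightarrow>\<^sub>0 nat) \<Rightarrow> nat) \<Rightarrow> bool" where
  "additive_weight w \<longleftrightarrow> (\<forall>a b. w (a + b) = w a + w b)"

definition weight_ge :: "((nat \<Rightarrow>\<^sub>0 nat) \<Rightarrow> nat) \<Rightarrow> nat \<Rightarrow> 'k::zero mpol set" where
  "weight_ge w k = {p. \<forall>u\<in>Poly_Mapping.keys p. k \<le> w u}"

definition weight_eq :: "((nat \<Rightarrow>\<^sub>0 nat) \<Rightarrow> nat) \<Rightarrow> nat \<Rightarrow> 'k::zero mpol set" where
  "weight_eq w k = {p. \<forall>u\<in>Poly_Mapping.keys p. w u = k}"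

lemma weight_ge_0 [simp]: "p \<in> weight_ge w 0"
  unfolding weight_ge_def by simp

lemma zero_weight_ge [simp]: "0 \<in> weight_ge w k"
  unfolding weight_ge_def by simp

lemma weight_ge_add: "p \<in> weight_ge w k \<Longrightarrow> q \<in> weight_ge w k \<Longrightarrow> p + q \<in> weight_ge w k"
  using keys_add[of p q] unfolding weight_ge_def by blast

lemma weight_ge_antimono: "a \<le> b \<Longrightarrow> p \<in> weight_ge w b \<Longrightarrow> p \<in> weight_ge w a"
  unfolding weight_ge_def by force

lemma weight_ge_mult:
  assumes "additive_weight w" "p \<in> weight_ge w a" "(q::'k::comm_semiring_1 mpol) \<in> weight_ge w b"
  shows "p * q \<in> weight_ge w (a + b)"
  unfolding weight_ge_def
proof (intro CollectI ballI)
  fix u assume "u \<in> Poly_Mapping.keys (p * q)"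
  then obtain x y where "u = x + y" "x \<in> Poly_Mapping.keys p" "y \<in> Poly_Mapping.keys q"
    using keys_mult[of p q] by blast
  then show "a + b \<le> w u" using assms unfolding weight_ge_def additive_weight_def by force
qed

lemma weight_ge_prod_list:
  assumes "additive_weight w" "set xs \<subseteq> weight_ge w 1"
  shows "prod_list (xs :: 'k::comm_semiring_1 mpol list) \<in> weight_ge w (length xs)"
  using assms(2) by (induction xs) (auto dest: weight_ge_mult[OF assms(1)])

lemma weight_eq_mult:
  assumes "additive_weight w" "p \<in> weight_eq w a" "(q::'k::comm_semiring_1 mpol) \<in> weight_eq w b"
  shows "p * q \<in> weight_eq w (a + b)"
  unfolding weight_eq_def
proof (intro CollectI ballI)
  fix u assume "u \<in> Poly_Mapping.keys (p * q)"
  then obtain x y where "u = x + y" "x \<in> Poly_Mapping.keys p" "y \<in> Poly_Mapping.keys q"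
    using keys_mult[of p q] by blast
  then show "w u = a + b" using assms unfolding weight_eq_def additive_weight_def by force
qed

lemma one_weight_eq:
  assumes "additive_weight w"
  shows "1 \<in> weight_eq w 0"
proof -
  have "w 0 = 0" using assms unfolding additive_weight_def by (metis add_0 add_cancel_right_right)
  then show ?thesis unfolding weight_eq_def by simp
qed

lemma weight_eq_prod:
  assumes "additive_weight w" "finite A" "\<And>a. a \<in> A \<Longrightarrow> f a \<in> weight_eq w (d a)"
  shows "(\<Prod>a\<in>A. f a :: 'k::comm_semiring_1 mpol) \<in> weight_eq w (\<Sum>a\<in>A. d a)"
  using assms(2,3)
  by (induction A rule: finite_induct) (auto intro: one_weight_eq[OF assms(1)] weight_eq_mult[OF assms(1)])

lemma weight_eq_power:
  assumes "additive_weight w" "(p::'k::comm_semiring_1 mpol) \<in> weight_eq w d"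
  shows "p ^ c \<in> weight_eq w (c * d)"
  by (induction c) (auto intro: one_weight_eq[OF assms(1)] weight_eq_mult[OF assms(1) assms(2)])

lemma weight_ge_split:
  fixes p :: "'k::comm_ring_1 mpol"
  assumes "p \<in> weight_ge w k"
  obtains p0 p1 where "p = p0 + p1" "p0 \<in> weight_eq w k" "p1 \<in> weight_ge w (Suc k)"
    "Poly_Mapping.keys p0 = {u \<in> Poly_Mapping.keys p. w u = k}"
proof -
  define g where "g u = (if w u = k then Poly_Mapping.lookup p u else 0)" for u
  have "finite {u. g u \<noteq> 0}"
    by (rule finite_subset[of _ "Poly_Mapping.keys p"]) (auto simp: g_def in_keys_iff split: if_splits)
  then have lookup_p0: "Poly_Mapping.lookup (Abs_poly_mapping g) = g" by simp
  have keys_p0: "Poly_Mapping.keys (Abs_poly_mapping g) = {u \<in> Poly_Mapping.keys p. w u = k}"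
    by (auto simp: in_keys_iff lookup_p0 g_def split: if_splits)
  have "Poly_Mapping.keys (p - Abs_poly_mapping g) \<subseteq> {u \<in> Poly_Mapping.keys p. w u \<noteq> k}"
    by (auto simp: in_keys_iff lookup_minus lookup_p0 g_def split: if_splits)
  then have "p - Abs_poly_mapping g \<in> weight_ge w (Suc k)"
    using assms unfolding weight_ge_def by fastforce
  moreover have "Abs_poly_mapping g \<in> weight_eq w k" using keys_p0 unfolding weight_eq_def by simp
  ultimately show thesis using that[of "Abs_poly_mapping g" "p - Abs_poly_mapping g"] keys_p0 by simp
qed

lemma add_not_weight_ge:
  assumes "p \<in> weight_eq w k" "p \<noteq> 0" "q \<in> weight_ge w (Suc k)"
  shows "p + q \<notin> weight_ge w (Suc k)"
proof -
  obtain u where u: "u \<in> Poly_Mapping.keys p" using assms(2) by (metis keys_eq_empty all_not_in_conv)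
  then have "w u = k" using assms(1) unfolding weight_eq_def by blast
  then have "u \<notin> Poly_Mapping.keys q" using assms(3) unfolding weight_ge_def by force
  then have "u \<in> Poly_Mapping.keys (p + q)" using u by (simp add: in_keys_iff lookup_add)
  with \<open>w u = k\<close> show ?thesis unfolding weight_ge_def by force
qed

text \<open>The weight filtration is multiplicative (a graded domain), so a factor with a monomial of
  weight zero cannot raise the weight: compare the lowest-weight parts of \<open>s\<close> and \<open>f\<close>.\<close>
lemma weight_ge_cancel:
  fixes s f :: "'k::idom mpol"
  assumes w: "additive_weight w" and s: "s \<notin> weight_ge w 1" and sf: "s * f \<in> weight_ge w m"
  shows "f \<in> weight_ge w m"
proof (rule ccontr)
  assume "f \<notin> weight_ge w m"
  then obtain u0 where u0: "u0 \<in> Poly_Mapping.keys f" "w u0 < m" unfolding weight_ge_def by force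
  define k where "k = Min (w ` Poly_Mapping.keys f)"
  have k_le: "k \<le> w u" if "u \<in> Poly_Mapping.keys f" for u
    unfolding k_def using that by simp
  have "k \<in> w ` Poly_Mapping.keys f" unfolding k_def using u0(1) by (intro Min_in) auto
  then have k_attained: "\<exists>u\<in>Poly_Mapping.keys f. w u = k" by auto
  have "f \<in> weight_ge w k" using k_le unfolding weight_ge_def by blast
  then obtain f0 f1 where f: "f = f0 + f1" "f0 \<in> weight_eq w k" "f1 \<in> weight_ge w (Suc k)"
    and "Poly_Mapping.keys f0 = {u \<in> Poly_Mapping.keys f. w u = k}"
    by (rule weight_ge_split)
  with k_attained have "f0 \<noteq> 0" by auto
  obtain s0 s1 where s': "s = s0 + s1" "s0 \<in> weight_eq w 0" "s1 \<in> weight_ge w (Suc 0)"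
    and "Poly_Mapping.keys s0 = {u \<in> Poly_Mapping.keys s. w u = 0}"
    using weight_ge_split[OF weight_ge_0[of s w]] .
  moreover have "\<exists>u\<in>Poly_Mapping.keys s. w u = 0" using s unfolding weight_ge_def by force
  ultimately have "s0 \<noteq> 0" by auto
  have "s * f = s0 * f0 + (s0 * f1 + s1 * f)"
    unfolding s'(1) f(1) by (simp add: algebra_simps)
  moreover have "s0 * f0 \<in> weight_eq w k" using weight_eq_mult[OF w s'(2) f(2)] by simp
  moreover have "s0 * f0 \<noteq> 0" using \<open>s0 \<noteq> 0\<close> \<open>f0 \<noteq> 0\<close> by simp
  moreover have "s0 * f1 + s1 * f \<in> weight_ge w (Suc k)"
    using weight_ge_mult[OF w weight_ge_0 f(3), of s0] weight_ge_mult[OF w s'(3) \<open>f \<in> weight_ge w k\<close>]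
    by (auto intro: weight_ge_add)
  ultimately have "s * f \<notin> weight_ge w (Suc k)" by (simp add: add_not_weight_ge)
  moreover have "Suc k \<le> m" using k_le[OF u0(1)] u0(2) by simp
  ultimately show False using sf weight_ge_antimono by blast
qed

lemma additive_weight_mon_deg: "additive_weight mon_deg"
  unfolding additive_weight_def mon_deg_def
  by (intro allI setsum_keys_plus_distrib[where f = "\<lambda>_ x. x"]) simp_all

lemma homogeneous_of_iff_weight_eq: "homogeneous_of t p \<longleftrightarrow> p \<in> weight_eq mon_deg t"
  unfolding homogeneous_of_def weight_eq_def by simp

lemma mon_deg_eq_sum:
  assumes "finite S" "Poly_Mapping.keys u \<subseteq> S"
  shows "mon_deg u = (\<Sum>i\<in>S. Poly_Mapping.lookup u i)"
  unfolding mon_deg_def using assms by (intro sum.mono_neutral_left) (auto simp: in_keys_iff)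

section \<open>Stanley-Reisner ideals and their symbolic powers\<close>

definition complex_of :: "nat set set \<Rightarrow> nat set set" where
  "complex_of Fs = {\<sigma>. \<exists>F\<in>Fs. \<sigma> \<subseteq> F}"

lemma complex_of_downward_closed: "\<sigma> \<in> complex_of Fs \<Longrightarrow> \<tau> \<subseteq> \<sigma> \<Longrightarrow> \<tau> \<in> complex_of Fs"
  unfolding complex_of_def by blast

lemma sqfree_monomial_mem_stanley_reisner:
  assumes "\<tau> \<subseteq> V" "\<tau> \<notin> \<Delta>"
  shows "(sqfree_monomial \<tau> :: 'k::comm_ring_1 mpol) \<in> stanley_reisner V \<Delta>"
proof -
  have "1 * sqfree_monomial \<tau> \<in> ideal_gen (polys V) {sqfree_monomial \<sigma> |\<sigma>. \<sigma> \<subseteq> V \<and> \<sigma> \<notin> \<Delta>}"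
    using assms by (intro ideal_gen_mult_mem polys_one) auto
  then show ?thesis unfolding stanley_reisner_def by simp
qed

lemma mem_stanley_reisner_iff:
  assumes "finite V"
  shows "(p :: 'k::comm_ring_1 mpol) \<in> stanley_reisner V (complex_of Fs)
    \<longleftrightarrow> p \<in> polys V \<and> (\<forall>u\<in>Poly_Mapping.keys p. Poly_Mapping.keys u \<notin> complex_of Fs)"
proof -
  let ?N = "{q :: 'k mpol. q \<in> polys V \<and> (\<forall>u\<in>Poly_Mapping.keys q. Poly_Mapping.keys u \<notin> complex_of Fs)}"
  have "stanley_reisner V (complex_of Fs) \<subseteq> ?N"
    unfolding stanley_reisner_def
  proof (rule ideal_gen_subset)
    show "0 \<in> ?N" by (simp add: polys_zero)
    show "a + b \<in> ?N" if "a \<in> ?N" "b \<in> ?N" for a b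
      using that keys_add[of a b] polys_add[of a V b] by blast
    fix r g :: "'k mpol"
    assume r: "r \<in> polys V" and "g \<in> {sqfree_monomial \<tau> |\<tau>. \<tau> \<subseteq> V \<and> \<tau> \<notin> complex_of Fs}"
    then obtain \<tau> where \<tau>: "g = sqfree_monomial \<tau>" "\<tau> \<subseteq> V" "\<tau> \<notin> complex_of Fs" by blast
    have "finite \<tau>" using \<tau>(2) assms finite_subset by blast
    then have g: "g = Poly_Mapping.single (sqfree_exp \<tau>) 1"
      using \<tau>(1) by (simp add: sqfree_monomial_eq_single)
    have "Poly_Mapping.keys u \<notin> complex_of Fs" if u: "u \<in> Poly_Mapping.keys (r * g)" for u
    proof -
      obtain a where "u = a + sqfree_exp \<tau>"
        using u keys_mult[of r g] unfolding g by auto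
      then have "\<tau> \<subseteq> Poly_Mapping.keys u"
        using \<open>finite \<tau>\<close> by (auto simp: keys_add_nat keys_sqfree_exp)
      then show ?thesis using \<tau>(3) complex_of_downward_closed by blast
    qed
    moreover have "r * g \<in> polys V"
      using polys_mult[OF r] \<tau>(2) g \<open>finite \<tau>\<close> by (simp add: polys_single keys_sqfree_exp)
    ultimately show "r * g \<in> ?N" by blast
  qed
  moreover have "p \<in> stanley_reisner V (complex_of Fs)" if p: "p \<in> ?N"
  proof -
    have "Poly_Mapping.single u (Poly_Mapping.lookup p u) \<in> stanley_reisner V (complex_of Fs)"
      if u: "u \<in> Poly_Mapping.keys p" for u
    proof -
      define d where "d = u - sqfree_exp (Poly_Mapping.keys u)"
      have "u = d + sqfree_exp (Poly_Mapping.keys u)"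
        by (rule poly_mapping_eqI) (auto simp: d_def lookup_add lookup_minus lookup_sqfree_exp in_keys_iff)
      then have u_eq: "Poly_Mapping.single u (Poly_Mapping.lookup p u)
          = Poly_Mapping.single d (Poly_Mapping.lookup p u) * sqfree_monomial (Poly_Mapping.keys u)"
        by (metis finite_keys mult_single mult.comm_neutral sqfree_monomial_eq_single)
      have "Poly_Mapping.keys d \<subseteq> V"
        using p u unfolding polys_def d_def by (force simp: in_keys_iff lookup_minus)
      moreover have "sqfree_monomial (Poly_Mapping.keys u) \<in> {sqfree_monomial \<tau> |\<tau>. \<tau> \<subseteq> V \<and> \<tau> \<notin> complex_of Fs}"
        using p u unfolding polys_def by blast
      ultimately show ?thesis unfolding u_eq stanley_reisner_def by (rule ideal_gen_mult_mem[OF polys_single])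
    qed
    then have "(\<Sum>u\<in>Poly_Mapping.keys p. Poly_Mapping.single u (Poly_Mapping.lookup p u))
        \<in> stanley_reisner V (complex_of Fs)"
      unfolding stanley_reisner_def by (intro ideal_gen_sum polys_zero polys_add) auto
    then show ?thesis using poly_mapping_sum_single[of p] by simp
  qed
  ultimately show ?thesis by blast
qed

lemma stanley_reisner_subset_polys:
  "finite V \<Longrightarrow> stanley_reisner V (complex_of Fs) \<subseteq> (polys V :: 'k::comm_ring_1 mpol set)"
  using mem_stanley_reisner_iff by blast

text \<open>\<open>weight_ge (out_weight V F) m\<close> is the \<open>m\<close>-th power of the prime \<open>(x_j : j \<in> V - F)\<close>,
  and \<open>facet_prime V F\<close> is that prime.\<close>
definition out_weight :: "nat set \<Rightarrow> nat set \<Rightarrow> (nat \<Rightarrow>\<^sub>0 nat) \<Rightarrow> nat" where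
  "out_weight V F u = (\<Sum>j\<in>V - F. Poly_Mapping.lookup u j)"

definition facet_prime :: "nat set \<Rightarrow> nat set \<Rightarrow> 'k::comm_ring_1 mpol set" where
  "facet_prime V F = polys V \<inter> weight_ge (out_weight V F) 1"

lemma additive_out_weight: "additive_weight (out_weight V F)"
  unfolding additive_weight_def out_weight_def by (simp add: lookup_add sum.distrib)

lemma out_weight_eq_0_iff:
  assumes "finite V" "Poly_Mapping.keys u \<subseteq> V"
  shows "out_weight V F u = 0 \<longleftrightarrow> Poly_Mapping.keys u \<subseteq> F"
  using assms unfolding out_weight_def by (auto simp: in_keys_iff)

lemma nonzero_not_in_facet_prime:
  assumes "p \<in> polys F" "p \<noteq> 0"
  shows "p \<notin> facet_prime V F"
proof -
  obtain u where "u \<in> Poly_Mapping.keys p" using assms(2) by (metis keys_eq_empty all_not_in_conv)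
  moreover from this have "Poly_Mapping.keys u \<subseteq> F" using assms(1) unfolding polys_def by blast
  then have "out_weight V F u = 0"
    unfolding out_weight_def by (intro sum.neutral) (auto simp: in_keys_iff)
  ultimately show ?thesis unfolding facet_prime_def weight_ge_def by fastforce
qed

lemma prime_ideal_facet_prime: "prime_ideal (polys V) (facet_prime V F :: 'k::idom mpol set)"
  unfolding prime_ideal_def is_ideal_def
proof (intro conjI ballI impI)
  show "facet_prime V F \<subseteq> polys V" "0 \<in> facet_prime V F"
    unfolding facet_prime_def by (auto intro: polys_zero)
  show "a + b \<in> facet_prime V F" if "a \<in> facet_prime V F" "b \<in> facet_prime V F" for a b :: "'k mpol"
    using that unfolding facet_prime_def by (auto intro: polys_add weight_ge_add)
  show "r * a \<in> facet_prime V F" if "r \<in> polys V" "a \<in> facet_prime V F" for r a :: "'k mpol"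
    using that weight_ge_mult[OF additive_out_weight weight_ge_0, of a V F 1 r]
    unfolding facet_prime_def by (auto intro: polys_mult)
  show "facet_prime V F \<noteq> (polys V :: 'k mpol set)"
    using nonzero_not_in_facet_prime[of 1 F V] polys_one by force
  show "a \<in> facet_prime V F \<or> b \<in> facet_prime V F"
    if "a \<in> polys V" "b \<in> polys V" "a * b \<in> facet_prime V F" for a b :: "'k mpol"
    using that weight_ge_cancel[OF additive_out_weight, of a V F b 1] unfolding facet_prime_def by auto
qed

lemma stanley_reisner_subset_weight_ge:
  assumes "finite V" "F \<in> complex_of Fs"
  shows "(stanley_reisner V (complex_of Fs) :: 'k::comm_ring_1 mpol set) \<subseteq> weight_ge (out_weight V F) 1"
proof
  fix p :: "'k mpol" assume "p \<in> stanley_reisner V (complex_of Fs)"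
  then have p: "p \<in> polys V" "\<forall>u\<in>Poly_Mapping.keys p. Poly_Mapping.keys u \<notin> complex_of Fs"
    using mem_stanley_reisner_iff[OF assms(1)] by blast+
  have "1 \<le> out_weight V F u" if u: "u \<in> Poly_Mapping.keys p" for u
  proof -
    have "\<not> Poly_Mapping.keys u \<subseteq> F" using p(2) u assms(2) complex_of_downward_closed by blast
    moreover have "Poly_Mapping.keys u \<subseteq> V" using p(1) u unfolding polys_def by blast
    ultimately show ?thesis using out_weight_eq_0_iff[OF assms(1)] by fastforce
  qed
  then show "p \<in> weight_ge (out_weight V F) 1" unfolding weight_ge_def by blast
qed

lemma ideal_pow_subset_weight_ge:
  assumes "I \<subseteq> weight_ge w 1" "additive_weight w"
  shows "ideal_pow R I m \<subseteq> (weight_ge w m :: 'k::comm_ring_1 mpol set)"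
  unfolding ideal_pow_def
proof (rule ideal_gen_subset)
  fix r g :: "'k mpol" assume "g \<in> {prod_list xs |xs. length xs = m \<and> set xs \<subseteq> I}"
  then obtain xs where "g = prod_list xs" "length xs = m" "set xs \<subseteq> I" by blast
  then have "g \<in> weight_ge w m" using weight_ge_prod_list[OF assms(2)] assms(1) by blast
  then show "r * g \<in> weight_ge w m" using weight_ge_mult[OF assms(2) weight_ge_0, of g m r] by simp
qed (auto intro: weight_ge_add)

lemma facet_prime_mem_Ass:
  assumes V: "finite V" and F: "F \<in> Fs" "F \<subseteq> V" and maximal: "\<And>G. G \<in> Fs \<Longrightarrow> F \<subseteq> G \<Longrightarrow> G = F"
  shows "(facet_prime V F :: 'k::idom mpol set) \<in> Ass (polys V) (stanley_reisner V (complex_of Fs))"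
proof -
  have "finite F" using F V finite_subset by blast
  define g where "g = (sqfree_monomial F :: 'k mpol)"
  have g: "g = Poly_Mapping.single (sqfree_exp F) 1"
    unfolding g_def using \<open>finite F\<close> by (simp add: sqfree_monomial_eq_single)
  have g_polys: "g \<in> polys F" "g \<in> polys V"
    unfolding g using \<open>finite F\<close> F(2) by (simp_all add: polys_single keys_sqfree_exp)
  have F_face: "F \<in> complex_of Fs" using F unfolding complex_of_def by blast
  have "facet_prime V F = {r \<in> polys V. r * g \<in> stanley_reisner V (complex_of Fs)}"
  proof (intro set_eqI iffI)
    fix r :: "'k mpol" assume "r \<in> facet_prime V F"
    then have r: "r \<in> polys V" "r \<in> weight_ge (out_weight V F) 1" unfolding facet_prime_def by blast+
    have "Poly_Mapping.keys u \<notin> complex_of Fs" if u: "u \<in> Poly_Mapping.keys (r * g)" for u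
    proof
      assume "Poly_Mapping.keys u \<in> complex_of Fs"
      then obtain G where G: "G \<in> Fs" "Poly_Mapping.keys u \<subseteq> G" unfolding complex_of_def by blast
      have "u \<in> {a + b |a b. a \<in> Poly_Mapping.keys r \<and> b \<in> Poly_Mapping.keys g}"
        using u keys_mult[of r g] by blast
      then obtain a where a: "u = a + sqfree_exp F" "a \<in> Poly_Mapping.keys r" unfolding g by auto
      have keys_u: "Poly_Mapping.keys u = Poly_Mapping.keys a \<union> F"
        using a(1) \<open>finite F\<close> by (simp add: keys_add_nat keys_sqfree_exp)
      then have "G = F" using maximal[OF G(1)] G(2) by blast
      moreover have "\<not> Poly_Mapping.keys a \<subseteq> F"
      proof -
        have "1 \<le> out_weight V F a" using r(2) a(2) unfolding weight_ge_def by blast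
        moreover have "Poly_Mapping.keys a \<subseteq> V" using r(1) a(2) unfolding polys_def by blast
        ultimately show ?thesis using out_weight_eq_0_iff[OF V, of a F] by simp
      qed
      ultimately show False using G(2) keys_u by blast
    qed
    then show "r \<in> {r \<in> polys V. r * g \<in> stanley_reisner V (complex_of Fs)}"
      using r(1) polys_mult[OF r(1) g_polys(2)] mem_stanley_reisner_iff[OF V] by blast
  next
    fix r :: "'k mpol" assume "r \<in> {r \<in> polys V. r * g \<in> stanley_reisner V (complex_of Fs)}"
    then have "r \<in> polys V" "g * r \<in> weight_ge (out_weight V F) 1"
      using stanley_reisner_subset_weight_ge[OF V F_face] by (auto simp: mult.commute)
    moreover have "g \<notin> facet_prime V F" using nonzero_not_in_facet_prime[OF g_polys(1), of V] unfolding g by simp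
    then have "g \<notin> weight_ge (out_weight V F) 1" using g_polys(2) unfolding facet_prime_def by blast
    ultimately show "r \<in> facet_prime V F"
      using weight_ge_cancel[OF additive_out_weight] unfolding facet_prime_def by blast
  qed
  then show ?thesis unfolding Ass_def using prime_ideal_facet_prime g_polys(2) by blast
qed

lemma Ass_subset_facet_prime:
  assumes V: "finite V"
    and P: "P \<in> Ass (polys V) (stanley_reisner V (complex_of Fs) :: 'k::idom mpol set)"
  shows "\<exists>G\<in>Fs. P \<subseteq> facet_prime V G"
proof -
  obtain g where g: "g \<in> polys V" and P_eq: "P = {r \<in> polys V. r * g \<in> stanley_reisner V (complex_of Fs)}"
    and P_ideal: "is_ideal (polys V) P" and "P \<noteq> polys V"
    using P unfolding Ass_def prime_ideal_def by blast
  have "1 \<notin> P"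
  proof
    assume "1 \<in> P"
    then have "polys V \<subseteq> P" using P_ideal unfolding is_ideal_def by (metis mult_1_right subsetI)
    then show False using \<open>P \<noteq> polys V\<close> P_ideal unfolding is_ideal_def by blast
  qed
  then have "1 * g \<notin> stanley_reisner V (complex_of Fs)" using P_eq polys_one[of V] by blast
  then have "g \<notin> stanley_reisner V (complex_of Fs)" by simp
  then obtain u where u: "u \<in> Poly_Mapping.keys g" "Poly_Mapping.keys u \<in> complex_of Fs"
    using g mem_stanley_reisner_iff[OF V] by blast
  then obtain G where G: "G \<in> Fs" "Poly_Mapping.keys u \<subseteq> G" unfolding complex_of_def by blast
  have G_face: "G \<in> complex_of Fs" using G(1) unfolding complex_of_def by blast
  have "out_weight V G u = 0"
    using u(1) G(2) g out_weight_eq_0_iff[OF V] unfolding polys_def by blast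
  then have g_weight: "g \<notin> weight_ge (out_weight V G) 1" using u(1) unfolding weight_ge_def by fastforce
  have "r \<in> facet_prime V G" if "r \<in> P" for r
  proof -
    have "r \<in> polys V" "g * r \<in> weight_ge (out_weight V G) 1"
      using that P_eq stanley_reisner_subset_weight_ge[OF V G_face] by (auto simp: mult.commute)
    then show ?thesis using weight_ge_cancel[OF additive_out_weight g_weight] unfolding facet_prime_def by blast
  qed
  then show ?thesis using G(1) by blast
qed

lemma symbolic_power_subset_weight_ge:
  assumes V: "finite V" and F: "F \<in> Fs" "F \<subseteq> V" and maximal: "\<And>G. G \<in> Fs \<Longrightarrow> F \<subseteq> G \<Longrightarrow> G = F"
  shows "symbolic_power (polys V) (stanley_reisner V (complex_of Fs) :: 'k::idom mpol set) m
    \<subseteq> weight_ge (out_weight V F) m"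
proof
  fix f assume "f \<in> symbolic_power (polys V) (stanley_reisner V (complex_of Fs) :: 'k mpol set) m"
  then obtain s where s: "s \<in> polys V - facet_prime V F"
    and sf: "s * f \<in> ideal_pow (polys V) (stanley_reisner V (complex_of Fs)) m"
    using facet_prime_mem_Ass[OF V F maximal] unfolding symbolic_power_def by blast
  have "F \<in> complex_of Fs" using F unfolding complex_of_def by blast
  then have "s * f \<in> weight_ge (out_weight V F) m"
    using sf ideal_pow_subset_weight_ge[OF stanley_reisner_subset_weight_ge[OF V] additive_out_weight]
    by blast
  moreover have "s \<notin> weight_ge (out_weight V F) 1" using s unfolding facet_prime_def by blast
  ultimately show "f \<in> weight_ge (out_weight V F) m" using weight_ge_cancel[OF additive_out_weight] by blast
qed

lemma symbolic_power_memI: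
  assumes V: "finite V" and f: "f \<in> polys V"
    and witness: "\<And>G. G \<in> Fs \<Longrightarrow> \<exists>s\<in>polys V - facet_prime V G.
        s * f \<in> ideal_pow (polys V) (stanley_reisner V (complex_of Fs)) m"
  shows "f \<in> symbolic_power (polys V) (stanley_reisner V (complex_of Fs) :: 'k::idom mpol set) m"
  unfolding symbolic_power_def
proof (intro CollectI conjI ballI f)
  fix P assume "P \<in> Ass (polys V) (stanley_reisner V (complex_of Fs) :: 'k mpol set)"
  then obtain G where "G \<in> Fs" "P \<subseteq> facet_prime V G" using Ass_subset_facet_prime[OF V] by blast
  then show "\<exists>s\<in>polys V - P. s * f \<in> ideal_pow (polys V) (stanley_reisner V (complex_of Fs)) m"
    using witness by blast
qed

lemma mult_prod_list_mem_ideal_pow: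
  fixes xs :: "'k::comm_ring_1 mpol list" and m :: nat
  assumes "r \<in> polys V" "set xs \<subseteq> I" "I \<subseteq> polys V" "m \<le> length xs"
  shows "r * prod_list xs \<in> ideal_pow (polys V) I m"
proof -
  have "prod_list xs = prod_list (take m xs) * prod_list (drop m xs)"
    by (metis append_take_drop_id prod_list.append)
  then have "r * prod_list xs = (r * prod_list (drop m xs)) * prod_list (take m xs)"
    by (simp add: ac_simps)
  moreover have "r * prod_list (drop m xs) \<in> polys V"
    using assms(1-3) set_drop_subset[of m xs] by (intro polys_mult polys_prod_list) auto
  moreover have "prod_list (take m xs) \<in> {prod_list ys |ys. length ys = m \<and> set ys \<subseteq> I}"
    using assms(2,4) set_take_subset[of m xs] by (intro CollectI exI[of _ "take m xs"]) auto
  ultimately show ?thesis unfolding ideal_pow_def by (simp add: ideal_gen_mult_mem)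
qed

lemma alpha_le:
  assumes "p \<in> J" "p \<noteq> 0" "homogeneous_of t p"
  shows "alpha J \<le> t"
proof -
  have "\<exists>p\<in>J. p \<noteq> 0 \<and> homogeneous_of t p" using assms by blast
  then show ?thesis unfolding alpha_def by (rule Least_le)
qed

lemma alpha_attained:
  assumes "p \<in> J" "p \<noteq> 0" "homogeneous_of t p"
  shows "\<exists>q\<in>J. q \<noteq> 0 \<and> homogeneous_of (alpha J) q"
proof -
  have "\<exists>t. \<exists>p\<in>J. p \<noteq> 0 \<and> homogeneous_of t p" using assms by blast
  then show ?thesis unfolding alpha_def by (rule LeastI_ex)
qed

section \<open>The bipyramid\<close>

lemma bipyramid_eq_complex_of: "bipyramid n = complex_of (bipyramid_facets n)"
  unfolding bipyramid_def complex_of_def by simp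

lemma ngon_edgeE:
  assumes "e \<in> ngon_edges n" "n \<ge> 3"
  obtains i i' where "e = {i, i'}" "i \<in> {1..n}" "i' \<in> {1..n}" "i \<noteq> i'"
proof -
  from assms(1) consider (path) i where "e = {i, i + 1}" "1 \<le> i" "i \<le> n - 1" | (closing) "e = {n, 1}"
    unfolding ngon_edges_def by blast
  then show thesis
  proof cases
    case (path i)
    then show thesis using that[of i "i + 1"] assms(2) by simp
  next
    case closing
    then show thesis using that[of n 1] assms(2) by simp
  qed
qed

lemma bipyramid_facetE:
  assumes "F \<in> bipyramid_facets n" "n \<ge> 3"
  obtains a i i' where "F = {a, i, i'}" "a = 0 \<or> a = n + 1" "i \<in> {1..n}" "i' \<in> {1..n}" "i \<noteq> i'"
proof -
  obtain a e where "F = insert a e" "a = 0 \<or> a = n + 1" "e \<in> ngon_edges n"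
    using assms(1) unfolding bipyramid_facets_def by blast
  moreover obtain i i' where "e = {i, i'}" "i \<in> {1..n}" "i' \<in> {1..n}" "i \<noteq> i'"
    using ngon_edgeE[OF \<open>e \<in> ngon_edges n\<close> assms(2)] .
  ultimately show thesis using that by blast
qed

lemma bipyramid_facet_subset: "F \<in> bipyramid_facets n \<Longrightarrow> n \<ge> 3 \<Longrightarrow> F \<subseteq> {0..n+1}"
  by (erule bipyramid_facetE) auto

lemma bipyramid_facet_card: "F \<in> bipyramid_facets n \<Longrightarrow> n \<ge> 3 \<Longrightarrow> card F = 3"
  by (erule bipyramid_facetE) auto

lemma bipyramid_facet_maximal:
  assumes "F \<in> bipyramid_facets n" "G \<in> bipyramid_facets n" "F \<subseteq> G" "n \<ge> 3"
  shows "G = F"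
proof (rule card_subset_eq[symmetric])
  show "finite G" "F \<subseteq> G" using assms(3) bipyramid_facet_subset[OF assms(2,4)] finite_subset by auto
  show "card F = card G" using bipyramid_facet_card assms by simp
qed

lemma three_base_vertices_nonface:
  assumes "i \<in> {1..n}" "i' \<in> {1..n}" "j \<in> {1..n}" "i \<noteq> i'" "j \<noteq> i" "j \<noteq> i'" "n \<ge> 3"
  shows "{i, i', j} \<notin> bipyramid n"
proof
  assume "{i, i', j} \<in> bipyramid n"
  then obtain F where F: "F \<in> bipyramid_facets n" "{i, i', j} \<subseteq> F" unfolding bipyramid_def by blast
  obtain a b c where "F = {a, b, c}" "a = 0 \<or> a = n + 1"
    using bipyramid_facetE[OF F(1) assms(7)] by metis
  then have "{i, i', j} \<subseteq> {b, c}" using F(2) assms(1-3) by auto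
  then have "card {i, i', j} \<le> card {b, c}" by (intro card_mono) simp_all
  also have "\<dots> \<le> 2" by (simp add: card_insert_le_m1)
  finally show False using assms(4-6) by simp
qed

definition cycle_succ :: "nat \<Rightarrow> nat \<Rightarrow> nat" where
  "cycle_succ n i = (if i = n then 1 else i + 1)"

lemma cycle_succ_facets:
  assumes "i \<in> {1..n}" "a = 0 \<or> a = n + 1"
  shows "{a, i, cycle_succ n i} \<in> bipyramid_facets n"
proof -
  have "{i, cycle_succ n i} \<in> ngon_edges n"
    using assms(1) unfolding ngon_edges_def cycle_succ_def by (cases "i = n") auto
  then show ?thesis using assms(2) unfolding bipyramid_facets_def by blast
qed

lemma bij_betw_cycle_succ: "n \<ge> 1 \<Longrightarrow> bij_betw (cycle_succ n) {1..n} {1..n}"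
proof (rule bij_betw_imageI)
  show "inj_on (cycle_succ n) {1..n}" unfolding inj_on_def cycle_succ_def by auto
  assume "n \<ge> 1"
  have "j \<in> cycle_succ n ` {1..n}" if "j \<in> {1..n}" for j
    using that \<open>n \<ge> 1\<close> unfolding cycle_succ_def
    by (cases "j = 1") (auto intro!: image_eqI[of _ _ n] image_eqI[of _ _ "j - 1"])
  moreover have "cycle_succ n ` {1..n} \<subseteq> {1..n}" unfolding cycle_succ_def by auto
  ultimately show "cycle_succ n ` {1..n} = {1..n}" by blast
qed

text \<open>Summing the \<open>2n\<close> facet inequalities counts each base vertex four times and each apex
  \<open>n\<close> times; as \<open>n \<le> 2 (n - 2)\<close> for \<open>n \<ge> 4\<close>, the apex terms can then be absorbed.\<close>
lemma bipyramid_facet_inequalities_sum: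
  fixes L :: "nat \<Rightarrow> nat"
  assumes n: "n \<ge> 4"
    and facet: "\<And>a i. a = 0 \<or> a = n + 1 \<Longrightarrow> i \<in> {1..n} \<Longrightarrow>
        m + (L a + L i + L (cycle_succ n i)) \<le> (\<Sum>j\<in>{0..n+1}. L j)"
  shows "n * m \<le> (n - 2) * (\<Sum>j\<in>{0..n+1}. L j)"
proof -
  define t where "t = (\<Sum>j\<in>{0..n+1}. L j)"
  define S where "S = (\<Sum>j\<in>{1..n}. L j)"
  have succ_sum: "(\<Sum>j\<in>{1..n}. L (cycle_succ n j)) = S"
    unfolding S_def using sum.reindex_bij_betw[OF bij_betw_cycle_succ, of n L] n by simp
  have "{0..n+1} = insert 0 (insert (n+1) {1..n})" by auto
  then have t: "t = L 0 + L (n + 1) + S" unfolding t_def S_def by simp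
  have "n * m + n * L a + S + S \<le> n * t" if "a = 0 \<or> a = n + 1" for a
  proof -
    have "(\<Sum>i\<in>{1..n}. m + (L a + L i + L (cycle_succ n i))) \<le> (\<Sum>i\<in>{1..n}. t)"
      unfolding t_def using facet[OF that] by (intro sum_mono) simp
    then show ?thesis using succ_sum unfolding S_def by (simp add: sum.distrib)
  qed
  from this[of 0] this[of "n + 1"]
  have "2 * n * m + n * (L 0 + L (n + 1)) + 4 * S \<le> 2 * n * t" by (simp add: algebra_simps)
  moreover obtain k where "n = k + 4" using n by (metis add.commute le_add_diff_inverse)
  ultimately show ?thesis unfolding t_def[symmetric] t by (simp add: algebra_simps)
qed

abbreviation bipyramid_ideal :: "nat \<Rightarrow> 'k::comm_ring_1 mpol set" where
  "bipyramid_ideal n \<equiv> stanley_reisner {0..n+1} (bipyramid n)"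

lemma bipyramid_symbolic_power_degree_ge:
  assumes n: "n \<ge> 4"
    and f: "f \<in> symbolic_power (polys {0..n+1}) (bipyramid_ideal n :: 'k::idom mpol set) m"
    and "f \<noteq> 0" "homogeneous_of t f"
  shows "n * m \<le> (n - 2) * t"
proof -
  obtain u where u: "u \<in> Poly_Mapping.keys f" using \<open>f \<noteq> 0\<close> by (metis keys_eq_empty all_not_in_conv)
  have keys_u: "Poly_Mapping.keys u \<subseteq> {0..n+1}"
    using f u unfolding symbolic_power_def polys_def by blast
  define L where "L j = Poly_Mapping.lookup u j" for j
  have t: "t = (\<Sum>j\<in>{0..n+1}. L j)"
    using \<open>homogeneous_of t f\<close> u mon_deg_eq_sum[OF _ keys_u] unfolding homogeneous_of_def L_def by simp
  have "m + (L a + L i + L (cycle_succ n i)) \<le> t" if "a = 0 \<or> a = n + 1" "i \<in> {1..n}" for a i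
  proof -
    define F where "F = {a, i, cycle_succ n i}"
    have F_facet: "F \<in> bipyramid_facets n" unfolding F_def using cycle_succ_facets[OF that(2,1)] .
    then have F: "F \<in> bipyramid_facets n" "F \<subseteq> {0..n+1}" using bipyramid_facet_subset n by auto
    have "m \<le> out_weight {0..n+1} F u"
      using symbolic_power_subset_weight_ge[OF _ F bipyramid_facet_maximal[OF F(1)]] f u n
      unfolding bipyramid_eq_complex_of weight_ge_def by fastforce
    moreover have "t = out_weight {0..n+1} F u + (\<Sum>j\<in>F. L j)"
      unfolding t out_weight_def L_def by (rule sum.subset_diff[OF F(2)]) simp
    moreover have "(\<Sum>j\<in>F. L j) = L a + L i + L (cycle_succ n i)"
      using that n unfolding F_def cycle_succ_def by auto
    ultimately show ?thesis by simp
  qed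
  then show ?thesis unfolding t by (intro bipyramid_facet_inequalities_sum[OF n]) blast
qed

lemma prod_list_concat_replicate:
  "prod_list (concat (replicate c xs)) = (prod_list xs :: 'a::comm_monoid_mult) ^ c"
  by (induction c) simp_all

text \<open>For the facet \<open>{a, i, i'}\<close> take \<open>s = (x_i x_i')^((n - 2) c)\<close>: then
  \<open>s f = (x_i x_i')^c \<Prod>_j (x_i x_i' x_j)^c\<close> over the \<open>n - 2\<close> base vertices \<open>j \<notin> {i, i'}\<close>.\<close>
lemma bipyramid_base_power_mem_symbolic_power:
  assumes n: "n \<ge> 3" and m: "m \<le> (n - 2) * c"
  shows "(\<Prod>j\<in>{1..n}. Var j :: 'k::idom mpol) ^ c
    \<in> symbolic_power (polys {0..n+1}) (bipyramid_ideal n) m"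
  unfolding bipyramid_eq_complex_of
proof (rule symbolic_power_memI)
  show "(\<Prod>j\<in>{1..n}. Var j :: 'k mpol) ^ c \<in> polys {0..n+1}"
    by (intro polys_power polys_prod polys_Var) auto
  fix G assume "G \<in> bipyramid_facets n"
  then obtain a i i' where G: "G = {a, i, i'}" "a = 0 \<or> a = n + 1" "i \<in> {1..n}" "i' \<in> {1..n}" "i \<noteq> i'"
    using bipyramid_facetE n by blast
  define X where "X = (Var i * Var i' :: 'k mpol)"
  define s where "s = X ^ ((n - 2) * c)"
  have X: "X \<in> polys {0..n+1}" unfolding X_def using G by (intro polys_mult polys_Var) auto
  have s_G: "s \<in> polys G" unfolding s_def X_def using G(1) by (intro polys_power polys_mult polys_Var) auto
  have "s \<noteq> 0" unfolding s_def X_def by (simp add: Var_def)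
  have s: "s \<in> polys {0..n+1} - facet_prime {0..n+1} G"
    using nonzero_not_in_facet_prime[OF s_G \<open>s \<noteq> 0\<close>] polys_power[OF X] unfolding s_def by blast
  define Js where "Js = {1..n} - {i, i'}"
  have card_Js: "card Js = n - 2" unfolding Js_def using G by (simp add: card_Diff_subset)
  define js where "js = sorted_list_of_set Js"
  have js: "distinct js" "set js = Js" "length js = n - 2" unfolding js_def Js_def using card_Js Js_def by auto
  define gens where "gens = concat (replicate c (map (\<lambda>j. X * Var j) js))"
  have generator: "X * Var j \<in> stanley_reisner {0..n+1} (bipyramid n)" if "j \<in> Js" for j
  proof -
    have j: "j \<in> {1..n}" "j \<noteq> i" "j \<noteq> i'" using that unfolding Js_def by auto
    then have "X * Var j = sqfree_monomial {i, i', j}"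
      using G(5) unfolding X_def sqfree_monomial_def by (simp add: mult.assoc)
    moreover have "{i, i', j} \<notin> bipyramid n"
      using three_base_vertices_nonface[OF G(3,4) j(1) G(5) j(2,3) n] .
    moreover have "{i, i', j} \<subseteq> {0..n+1}" using G(3,4) j(1) by auto
    ultimately show ?thesis using sqfree_monomial_mem_stanley_reisner by metis
  qed
  have "set gens \<subseteq> (\<lambda>j. X * Var j) ` Js" unfolding gens_def using js(2) by auto
  then have gens_ideal: "set gens \<subseteq> stanley_reisner {0..n+1} (complex_of (bipyramid_facets n))"
    using generator unfolding bipyramid_eq_complex_of by blast
  have "s * (\<Prod>j\<in>{1..n}. Var j) ^ c = X ^ c * prod_list gens"
  proof -
    have Js: "{1..n} = insert i (insert i' Js)" "i \<notin> insert i' Js" "i' \<notin> Js" "finite Js"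
      unfolding Js_def using G by auto
    have "(\<Prod>j\<in>{1..n}. Var j :: 'k mpol) = (\<Prod>j\<in>insert i (insert i' Js). Var j)"
      using Js(1) by simp
    also have "\<dots> = X * (\<Prod>j\<in>Js. Var j)" using Js(2-4) unfolding X_def by (simp add: mult.assoc)
    finally have base: "(\<Prod>j\<in>{1..n}. Var j :: 'k mpol) = X * (\<Prod>j\<in>Js. Var j)" .
    have gens: "prod_list gens = (X ^ (n - 2) * (\<Prod>j\<in>Js. Var j)) ^ c"
      unfolding gens_def prod_list_concat_replicate prod.distinct_set_conv_list[OF js(1), symmetric] js(2)
      by (simp add: prod.distrib card_Js)
    show ?thesis unfolding s_def base gens power_mult power_mult_distrib by (simp add: ac_simps)
  qed
  moreover have "m \<le> length gens" unfolding gens_def using js(3) m by (simp add: length_concat sum_list_replicate mult.commute)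
  ultimately have "s * (\<Prod>j\<in>{1..n}. Var j) ^ c
      \<in> ideal_pow (polys {0..n+1}) (stanley_reisner {0..n+1} (complex_of (bipyramid_facets n))) m"
    using mult_prod_list_mem_ideal_pow[OF polys_power[OF X] gens_ideal stanley_reisner_subset_polys] by simp
  with s show "\<exists>s\<in>polys {0..n+1} - facet_prime {0..n+1} G.
      s * (\<Prod>j\<in>{1..n}. Var j :: 'k mpol) ^ c
        \<in> ideal_pow (polys {0..n+1}) (stanley_reisner {0..n+1} (complex_of (bipyramid_facets n))) m"
    by blast
qed simp

lemma homogeneous_base_power:
  "homogeneous_of (c * n) ((\<Prod>j\<in>{1..n}. Var j :: 'k::comm_semiring_1 mpol) ^ c)"
proof -
  have "Var j \<in> (weight_eq mon_deg 1 :: 'k mpol set)" for j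
    unfolding Var_def weight_eq_def by (simp add: mon_deg_def)
  then have "(\<Prod>j\<in>{1..n}. Var j :: 'k mpol) \<in> weight_eq mon_deg (\<Sum>j\<in>{1..n}. 1)"
    by (intro weight_eq_prod[OF additive_weight_mon_deg]) simp_all
  then have "(\<Prod>j\<in>{1..n}. Var j :: 'k mpol) \<in> weight_eq mon_deg n" by simp
  then show ?thesis unfolding homogeneous_of_iff_weight_eq by (rule weight_eq_power[OF additive_weight_mon_deg])
qed

lemma bipyramid_alpha_bounds:
  fixes n m :: nat
  assumes n: "n \<ge> 4"
  defines "A \<equiv> alpha (symbolic_power (polys {0..n+1}) (bipyramid_ideal n :: 'k::idom mpol set) m)"
  shows "n * m \<le> (n - 2) * A" and "(n - 2) * A \<le> n * m + n * (n - 2)"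
proof -
  define c where "c = m div (n - 2) + 1"
  define f where "f = (\<Prod>j\<in>{1..n}. Var j :: 'k mpol) ^ c"
  have "m mod (n - 2) < n - 2" using n by simp
  moreover have "(n - 2) * c = (n - 2) * (m div (n - 2)) + (n - 2)" unfolding c_def by simp
  moreover have "m = (n - 2) * (m div (n - 2)) + m mod (n - 2)" by simp
  ultimately have c: "m \<le> (n - 2) * c" "(n - 2) * c \<le> m + (n - 2)" by linarith+
  have f_mem: "f \<in> symbolic_power (polys {0..n+1}) (bipyramid_ideal n) m"
    unfolding f_def using n by (intro bipyramid_base_power_mem_symbolic_power c(1)) simp
  have f_nonzero: "f \<noteq> 0" unfolding f_def by (simp add: Var_def)
  have f_hom: "homogeneous_of (c * n) f" unfolding f_def by (rule homogeneous_base_power)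
  obtain g :: "'k mpol" where "g \<in> symbolic_power (polys {0..n+1}) (bipyramid_ideal n) m" "g \<noteq> 0" "homogeneous_of A g"
    using alpha_attained[OF f_mem f_nonzero f_hom] unfolding A_def by blast
  then show "n * m \<le> (n - 2) * A" by (rule bipyramid_symbolic_power_degree_ge[OF n])
  have "A \<le> c * n" unfolding A_def by (rule alpha_le[OF f_mem f_nonzero f_hom])
  then have "(n - 2) * A \<le> n * ((n - 2) * c)" using mult_le_mono2[of A "c * n" "n - 2"] by (simp add: ac_simps)
  also have "\<dots> \<le> n * (m + (n - 2))" using c(2) by (rule mult_le_mono2)
  also have "\<dots> = n * m + n * (n - 2)" by (simp add: distrib_left)
  finally show "(n - 2) * A \<le> n * m + n * (n - 2)" .
qed

lemma tendsto_div_of_linear_bounds: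
  fixes a :: "nat \<Rightarrow> real"
  assumes "d > 0" and lower: "\<And>m. b * real m \<le> d * a m" and upper: "\<And>m. d * a m \<le> b * real m + C"
  shows "(\<lambda>m. a m / real m) \<longlonglongrightarrow> b / d"
proof (rule tendsto_sandwich)
  show "\<forall>\<^sub>F m in sequentially. b / d \<le> a m / real m"
  proof (rule eventually_sequentiallyI[of 1])
    fix m :: nat assume "1 \<le> m"
    then have "d * real m > 0" using \<open>d > 0\<close> by simp
    have "b / d = (b * real m) / (d * real m)" using \<open>1 \<le> m\<close> by simp
    also have "\<dots> \<le> (d * a m) / (d * real m)" using lower[of m] \<open>d * real m > 0\<close> by (intro divide_right_mono) auto
    also have "\<dots> = a m / real m" using \<open>d > 0\<close> by simp
    finally show "b / d \<le> a m / real m" .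
  qed
  show "\<forall>\<^sub>F m in sequentially. a m / real m \<le> b / d + C / d * (1 / real m)"
  proof (rule eventually_sequentiallyI[of 1])
    fix m :: nat assume "1 \<le> m"
    then have "d * real m > 0" using \<open>d > 0\<close> by simp
    have "a m / real m = (d * a m) / (d * real m)" using \<open>d > 0\<close> by simp
    also have "\<dots> \<le> (b * real m + C) / (d * real m)" using upper[of m] \<open>d * real m > 0\<close> by (intro divide_right_mono) auto
    also have "\<dots> = b / d + C / d * (1 / real m)" using \<open>1 \<le> m\<close> by (simp add: add_divide_distrib)
    finally show "a m / real m \<le> b / d + C / d * (1 / real m)" .
  qed
  have "(\<lambda>m. b / d + C / d * (1 / real m)) \<longlonglongrightarrow> b / d + C / d * 0"
    by (intro tendsto_intros lim_const_over_n)
  then show "(\<lambda>m. b / d + C / d * (1 / real m)) \<longlonglongrightarrow> b / d" by simp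
qed simp

theorem theorem1p1:
  fixes n :: nat
  assumes "n \<ge> 4"
  shows "(\<lambda>m. real (alpha (symbolic_power (polys {0..n+1})
                (stanley_reisner {0..n+1} (bipyramid n) :: 'k::field mpol set) m)) / real m)
         \<longlonglongrightarrow> real n / (real n - 2)"
proof (rule tendsto_div_of_linear_bounds)
  let ?A = "\<lambda>m. alpha (symbolic_power (polys {0..n+1}) (bipyramid_ideal n :: 'k mpol set) m)"
  have n2: "real (n - 2) = real n - 2" using assms by simp
  show "real n - 2 > 0" using assms by simp
  fix m
  have "real (n * m) \<le> real ((n - 2) * ?A m)"
    using bipyramid_alpha_bounds(1)[OF assms, where 'k = 'k] by (simp only: of_nat_le_iff)
  then show "real n * real m \<le> (real n - 2) * real (?A m)" unfolding of_nat_mult n2 .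
  have "real ((n - 2) * ?A m) \<le> real (n * m + n * (n - 2))"
    using bipyramid_alpha_bounds(2)[OF assms, where 'k = 'k] by (simp only: of_nat_le_iff)
  then show "(real n - 2) * real (?A m) \<le> real n * real m + real n * (real n - 2)"
    unfolding of_nat_mult of_nat_add n2 .
qed

end
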